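(* There exists a task in the two-party one-way communication (Holevo–Frenkel–Weiner) scenario for which, with no pre-shared correlation, the utility of communicating one qubit is greater than that of communicating one polygon system: there exist finite sets $\mathcal{X},\mathcal{B}$ and a payoff function $\beta$ such that for every $n\ge3$, $\sup_{P\in\mathcal{Q}}\beta(P)>\sup_{P\in\mathcal{P}_n}\beta(P)$.
   Context: Scenario: Alice receives an input $x$ from a finite set $\mathcal{X}$, Bob must output $b$ from a finite set $\mathcal{B}$; a correlation is $P=(P(b|x))$, a task is a real payoff function $\beta$ on correlations, and the utility of a resource is $\sup\beta(P)$ over correlations achievable with it. $\mathcal{Q}$: correlations $P(b|x)=\operatorname{Tr}(\rho_x\pi_b)$ with each $\rho_x$ a density operator on $\mathbb{C}^2$ and $\{\pi_b\}$ a POVM on $\mathbb{C}^2$. Polygon model $n$: with $r_n=\sqrt{\sec(\pi/n)}$, the state space $\Omega(n)\subset\mathbb{R}^3$ is the convex hull of $\omega_i=(r_n\cos(2\pi i/n),r_n\sin(2\pi i/n),1)^{\mathrm T}$, $i=1,\dots,n$. The effect space $\mathcal{E}(n)$ is the convex hull of $z=(0,0,0)^{\mathrm T}$, $u=(0,0,1)^{\mathrm T}$, and $e_i,\bar e_i=u-e_i$ ($i=1,\dots,n$), where for odd $n$, $e_i=\frac{1}{1+r_n^2}(r_n\cos\frac{2\pi i}{n},r_n\sin\frac{2\pi i}{n},1)^{\mathrm T}$, and for even $n$, $e_i=\frac12(r_n\cos\frac{(2i-1)\pi}{n},r_n\sin\frac{(2i-1)\pi}{n},1)^{\mathrm T}$.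 A measurement is a family $\{f_b\}_{b\in\mathcal{B}}\subset\mathcal{E}(n)$ with $\sum_b f_b=u$, and the probability of outcome $b$ on state $\omega$ is $f_b^{\mathrm T}\omega$. $\mathcal{P}_n$ (one polygon-$n$ system, no shared correlation): correlations $P(b|x)=f_b^{\mathrm T}s_x$ with $s_x\in\Omega(n)$ and $\{f_b\}$ a measurement. *)

theory Defs
  imports "HOL-Analysis.Analysis"
begin

text \<open>Inputs are x < k (the finite set X = {0..<k}), outputs b < m (B = {0..<m}).
  A correlation is P :: nat => nat => real, with P x b the probability of b given x;
  entries outside X x B are fixed to 0 so that correlations correspond one-to-one to
  the functions on X x B.\<close>

definition in_range :: "nat \<Rightarrow> nat \<Rightarrow> (nat \<Rightarrow> nat \<Rightarrow> real) \<Rightarrow> bool" where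
  "in_range k m P \<longleftrightarrow> (\<forall>x b. \<not> (x < k \<and> b < m) \<longrightarrow> P x b = 0)"

definition psd2 :: "complex^2^2 \<Rightarrow> bool" where
  "psd2 A \<longleftrightarrow> (\<forall>v::complex^2. (\<Sum>i\<in>UNIV. cnj (v$i) * (A *v v)$i) \<in> \<real> \<and>
                  0 \<le> Re (\<Sum>i\<in>UNIV. cnj (v$i) * (A *v v)$i))"

definition density2 :: "complex^2^2 \<Rightarrow> bool" where
  "density2 \<rho> \<longleftrightarrow> psd2 \<rho> \<and> trace \<rho> = 1"

definition povm2 :: "nat \<Rightarrow> (nat \<Rightarrow> complex^2^2) \<Rightarrow> bool" where
  "povm2 m \<pi> \<longleftrightarrow> (\<forall>b<m. psd2 (\<pi> b)) \<and> (\<Sum>b<m. \<pi> b) = mat 1"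

definition qubit_corr :: "nat \<Rightarrow> nat \<Rightarrow> (nat \<Rightarrow> nat \<Rightarrow> real) set" where
  "qubit_corr k m = {P. in_range k m P \<and>
     (\<exists>\<rho> \<pi>. (\<forall>x<k. density2 (\<rho> x)) \<and> povm2 m \<pi> \<and>
        (\<forall>x<k. \<forall>b<m. complex_of_real (P x b) = trace (\<rho> x ** \<pi> b)))}"

definition r_poly :: "nat \<Rightarrow> real" where
  "r_poly n = sqrt (1 / cos (pi / real n))"

definition omega_poly :: "nat \<Rightarrow> nat \<Rightarrow> real^3" where
  "omega_poly n i = vector [r_poly n * cos (2 * pi * real i / real n),
                            r_poly n * sin (2 * pi * real i / real n), 1]"

definition states_poly :: "nat \<Rightarrow> (real^3) set" where
  "states_poly n = convex hull (omega_poly n ` {1..n})"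

definition u_poly :: "real^3" where
  "u_poly = vector [0, 0, 1]"

definition e_poly :: "nat \<Rightarrow> nat \<Rightarrow> real^3" where
  "e_poly n i = (if odd n then
      (1 / (1 + (r_poly n)\<^sup>2)) *\<^sub>R vector [r_poly n * cos (2 * pi * real i / real n),
                                         r_poly n * sin (2 * pi * real i / real n), 1]
    else
      (1 / 2) *\<^sub>R vector [r_poly n * cos ((2 * real i - 1) * pi / real n),
                         r_poly n * sin ((2 * real i - 1) * pi / real n), 1])"

definition effects_poly :: "nat \<Rightarrow> (real^3) set" where
  "effects_poly n = convex hull ({0, u_poly} \<union> e_poly n ` {1..n}
                                   \<union> (\<lambda>i. u_poly - e_poly n i) ` {1..n})"

definition measurement_poly :: "nat \<Rightarrow> nat \<Rightarrow> (nat \<Rightarrow> real^3) \<Rightarrow> bool" where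
  "measurement_poly n m f \<longleftrightarrow> (\<forall>b<m. f b \<in> effects_poly n) \<and> (\<Sum>b<m. f b) = u_poly"

definition polygon_corr :: "nat \<Rightarrow> nat \<Rightarrow> nat \<Rightarrow> (nat \<Rightarrow> nat \<Rightarrow> real) set" where
  "polygon_corr n k m = {P. in_range k m P \<and>
     (\<exists>s f. (\<forall>x<k. s x \<in> states_poly n) \<and> measurement_poly n m f \<and>
        (\<forall>x<k. \<forall>b<m. P x b = f b \<bullet> s x))}"

definition utility :: "((nat \<Rightarrow> nat \<Rightarrow> real) \<Rightarrow> real) \<Rightarrow> (nat \<Rightarrow> nat \<Rightarrow> real) set \<Rightarrow> ereal" where
  "utility \<beta> C = (SUP P\<in>C. ereal (\<beta> P))"

end

theory Submission
  imports Defs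
begin

text \<open>Polygon correlations are matrices of inner products of vectors in \<open>\<real>\<^sup>3\<close>, so every
  \<open>4 \<times> 4\<close> submatrix of them is singular. A qubit lives in the 4-dimensional real space of
  Hermitian \<open>2 \<times> 2\<close> matrices, and four states together with the Pauli-eigenbasis measurement
  yield a correlation with a nonsingular \<open>4 \<times> 4\<close> submatrix. The absolute value of that
  determinant is therefore a task on which one qubit beats every polygon model; only the
  dimension of the polygon model enters, not its shape.\<close>

definition sample_matrix ::
    "(nat \<Rightarrow> nat \<Rightarrow> real) \<Rightarrow> ('n::finite \<Rightarrow> nat) \<Rightarrow> ('n \<Rightarrow> nat) \<Rightarrow> real^'n^'n" where
  "sample_matrix P x_of b_of = (\<chi> i j. P (x_of i) (b_of j))"

lemma sample_matrix_cong:
  assumes "\<And>i j. P (x_of i) (b_of j) = Q (x_of i) (b_of j)"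
  shows "sample_matrix P x_of b_of = sample_matrix Q x_of b_of"
  using assms by (simp add: sample_matrix_def)

lemma det_sample_matrix_inner_eq_0:
  fixes s f :: "nat \<Rightarrow> real^'d" and x_of b_of :: "'n::finite \<Rightarrow> nat"
  assumes "CARD('d) < CARD('n)"
  shows "det (sample_matrix (\<lambda>x b. f b \<bullet> s x) x_of b_of) = 0"
proof -
  define S :: "real^'d^'n" where "S = (\<chi> i. s (x_of i))"
  define F :: "real^'n^'d" where "F = transpose (\<chi> j. f (b_of j))"
  have "sample_matrix (\<lambda>x b. f b \<bullet> s x) x_of b_of = S ** F"
    by (simp add: sample_matrix_def S_def F_def matrix_matrix_mult_def transpose_def
        vec_eq_iff inner_vec_def mult.commute)
  moreover have "rank (S ** F) \<le> CARD('d)"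
    using rank_mul_le_left[of S F] rank_bound[of S] by simp
  ultimately show ?thesis
    using assms by (simp add: det_eq_0_rank)
qed

lemma det_sample_matrix_polygon_corr:
  fixes x_of b_of :: "'n::finite \<Rightarrow> nat"
  assumes "P \<in> polygon_corr n k m" and "\<And>i. x_of i < k" and "\<And>j. b_of j < m"
    and "3 < CARD('n)"
  shows "det (sample_matrix P x_of b_of) = 0"
proof -
  obtain s f :: "nat \<Rightarrow> real^3" where "\<forall>x<k. \<forall>b<m. P x b = f b \<bullet> s x"
    using assms(1) unfolding polygon_corr_def by blast
  then have "sample_matrix P x_of b_of = sample_matrix (\<lambda>x b. f b \<bullet> s x) x_of b_of"
    using assms(2,3) by (intro sample_matrix_cong) blast
  then show ?thesis
    using det_sample_matrix_inner_eq_0[where f=f and s=s] assms(4) by simp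
qed

lemma utility_less_utility:
  assumes "P \<in> C" and "\<And>Q. Q \<in> D \<Longrightarrow> \<beta> Q \<le> c" and "c < \<beta> P"
  shows "utility \<beta> D < utility \<beta> C"
proof -
  have "utility \<beta> D \<le> ereal c"
    unfolding utility_def using assms(2) by (simp add: SUP_least)
  also have "\<dots> < ereal (\<beta> P)"
    using assms(3) by simp
  also have "\<dots> \<le> utility \<beta> C"
    unfolding utility_def using assms(1) by (rule SUP_upper)
  finally show ?thesis .
qed

definition ketbra :: "complex \<Rightarrow> complex^2 \<Rightarrow> complex^2^2" where
  "ketbra c \<psi> = (\<chi> i j. c * \<psi>$i * cnj (\<psi>$j))"

lemma psd2_ketbra:
  assumes "0 \<le> c"
  shows "psd2 (ketbra (complex_of_real c) \<psi>)"
  unfolding psd2_def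
proof
  fix v :: "complex^2"
  define w where "w = cnj (\<psi>$1) * v$1 + cnj (\<psi>$2) * v$2"
  have "(\<Sum>i\<in>UNIV. cnj (v$i) * (ketbra (complex_of_real c) \<psi> *v v)$i)
      = complex_of_real c * (cnj w * w)"
    unfolding ketbra_def matrix_vector_mult_def w_def
    by (simp add: sum_2 algebra_simps)
  also have "\<dots> = complex_of_real (c * (cmod w)\<^sup>2)"
    using complex_norm_square[of w] by (simp add: mult.commute)
  finally show "(\<Sum>i\<in>UNIV. cnj (v$i) * (ketbra (complex_of_real c) \<psi> *v v)$i) \<in> \<real> \<and>
      0 \<le> Re (\<Sum>i\<in>UNIV. cnj (v$i) * (ketbra (complex_of_real c) \<psi> *v v)$i)"
    using assms by simp
qed

definition witness_state :: "nat \<Rightarrow> complex^2^2" where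
  "witness_state x =
    (if x = 0 then ketbra 1 (vector [1, 0]) else if x = 1 then ketbra 1 (vector [0, 1])
     else if x = 2 then ketbra (1/2) (vector [1, 1]) else ketbra (1/2) (vector [1, \<i>]))"

definition pauli_povm :: "nat \<Rightarrow> complex^2^2" where
  "pauli_povm b =
    (if b = 0 then ketbra (1/3) (vector [1, 0]) else if b = 1 then ketbra (1/3) (vector [0, 1])
     else if b = 2 then ketbra (1/6) (vector [1, 1]) else if b = 3 then ketbra (1/6) (vector [1, -1])
     else if b = 4 then ketbra (1/6) (vector [1, \<i>]) else ketbra (1/6) (vector [1, -\<i>]))"

definition witness_table :: "real list list" where
  "witness_table =
    [[1, 0, 1/2, 1/2, 1/2, 1/2], [0, 1, 1/2, 1/2, 1/2, 1/2],
     [1/2, 1/2, 1, 0, 1/2, 1/2], [1/2, 1/2, 1/2, 1/2, 1, 0]]"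

definition witness_corr :: "nat \<Rightarrow> nat \<Rightarrow> real" where
  "witness_corr x b = (if x < 4 \<and> b < 6 then witness_table ! x ! b / 3 else 0)"

lemma density2_witness_state: "density2 (witness_state x)"
proof -
  have "psd2 (ketbra 1 v)" "psd2 (ketbra (1/2) v)" for v
    using psd2_ketbra[of 1 v] psd2_ketbra[of "1/2" v] by simp_all
  then have "psd2 (witness_state x)"
    unfolding witness_state_def by simp
  moreover have "trace (witness_state x) = 1"
    unfolding witness_state_def ketbra_def trace_def by (simp add: sum_2)
  ultimately show ?thesis
    unfolding density2_def by simp
qed

lemma povm2_pauli_povm: "povm2 6 pauli_povm"
proof -
  have "psd2 (ketbra (1/3) v)" "psd2 (ketbra (1/6) v)" for v
    using psd2_ketbra[of "1/3" v] psd2_ketbra[of "1/6" v] by simp_all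
  then have "psd2 (pauli_povm b)" for b
    unfolding pauli_povm_def by simp
  moreover have "(\<Sum>b<6. pauli_povm b) = mat 1"
    unfolding vec_eq_iff forall_2
    by (simp add: pauli_povm_def ketbra_def numeral_eq_Suc mat_def)
  ultimately show ?thesis
    unfolding povm2_def by simp
qed

lemma witness_corr_trace:
  assumes "x < 4" and "b < 6"
  shows "complex_of_real (witness_corr x b) = trace (witness_state x ** pauli_povm b)"
proof -
  have "x \<in> {0, 1, 2, 3}" "b \<in> {0, 1, 2, 3, 4, 5}"
    using assms by auto
  then show ?thesis
    by (auto simp: witness_corr_def witness_table_def witness_state_def pauli_povm_def
        ketbra_def trace_def matrix_matrix_mult_def sum_2)
qed

lemma witness_corr_qubit_corr: "witness_corr \<in> qubit_corr 4 6"
proof -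
  have "in_range 4 6 witness_corr"
    by (simp add: in_range_def witness_corr_def)
  then show ?thesis
    unfolding qubit_corr_def
    using density2_witness_state povm2_pauli_povm witness_corr_trace by blast
qed

definition witness_input :: "4 \<Rightarrow> nat" where
  "witness_input i = (if i = 1 then 0 else if i = 2 then 1 else if i = 3 then 2 else 3)"

definition witness_outcome :: "4 \<Rightarrow> nat" where
  "witness_outcome j = (if j = 1 then 0 else if j = 2 then 1 else if j = 3 then 2 else 4)"

lemma det_sample_matrix_witness_corr:
  "det (sample_matrix witness_corr witness_input witness_outcome) \<noteq> 0"
proof -
  let ?M = "sample_matrix witness_corr witness_input witness_outcome"
  have "v = 0" if "?M *v v = 0" for v
  proof -
    from that have "v$1 + v$3 / 2 + v$4 / 2 = 0" "v$2 + v$3 / 2 + v$4 / 2 = 0"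
        "v$1 / 2 + v$2 / 2 + v$3 + v$4 / 2 = 0" "v$1 / 2 + v$2 / 2 + v$3 / 2 + v$4 = 0"
      by (simp_all add: vec_eq_iff forall_4 matrix_vector_mult_def sum_4 sample_matrix_def
          witness_corr_def witness_table_def witness_input_def witness_outcome_def)
    then show "v = 0"
      by (simp add: vec_eq_iff forall_4)
  qed
  then have "inj ((*v) ?M)"
    by (simp add: linear_injective_0 matrix_vector_mul_linear)
  then show ?thesis
    using det_eq_0_rank less_rank_noninjective by blast
qed

theorem theorem5:
  shows "\<exists>(k::nat) (m::nat) (\<beta>::(nat \<Rightarrow> nat \<Rightarrow> real) \<Rightarrow> real).
           \<forall>n::nat. n \<ge> 3 \<longrightarrow> utility \<beta> (qubit_corr k m) > utility \<beta> (polygon_corr n k m)"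
proof (intro exI allI impI)
  fix n :: nat
  let ?\<beta> = "\<lambda>P. \<bar>det (sample_matrix P witness_input witness_outcome)\<bar>"
  have inputs: "witness_input i < 4" and outcomes: "witness_outcome j < 6" for i j
    by (simp_all add: witness_input_def witness_outcome_def)
  show "utility ?\<beta> (polygon_corr n 4 6) < utility ?\<beta> (qubit_corr 4 6)"
  proof (rule utility_less_utility)
    show "witness_corr \<in> qubit_corr 4 6"
      by (rule witness_corr_qubit_corr)
    show "?\<beta> P \<le> 0" if "P \<in> polygon_corr n 4 6" for P
      using det_sample_matrix_polygon_corr[OF that, where x_of = witness_input and b_of = witness_outcome]
        inputs outcomes by simp
    show "0 < ?\<beta> witness_corr"
      using det_sample_matrix_witness_corr by simp
  qed
qed

end
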